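(* Let $\varphi:(-1,1)\to\mathbb{R}^n$ be a $C^3$ curve with $\varphi'\neq0$. (i) If $S_1\varphi(x)\le \pi^2/2$ for all $x\in(-1,1)$, then for all $x_1,x_2\in(-1,1)$, $$\frac{|\varphi(x_1)-\varphi(x_2)|}{\{|\varphi'(x_1)||\varphi'(x_2)|\}^{1/2}}\ge \frac{2}{\pi}\sin\Big(\frac{\pi}{2}|x_1-x_2|\Big).$$ (ii) If $S_1\varphi(x)\le 2(1-x^2)^{-2}$ for all $x\in(-1,1)$, then for all $x_1,x_2\in(-1,1)$, $$\frac{|\varphi(x_1)-\varphi(x_2)|}{\{|\varphi'(x_1)||\varphi'(x_2)|\}^{1/2}}\ge \sqrt{(1-x_1^2)(1-x_2^2)}\;d(x_1,x_2),$$ where $d(x_1,x_2)=\big|\tfrac12\log\tfrac{1+x_1}{1-x_1}-\tfrac12\log\tfrac{1+x_2}{1-x_2}\big|$.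
   Context: For a $C^3$ curve $\varphi$ into $\mathbb{R}^n$ with $\varphi'\neq0$, the Ahlfors Schwarzian is $S_1\varphi=\frac{\langle\varphi',\varphi'''\rangle}{|\varphi'|^2}-3\frac{\langle\varphi',\varphi''\rangle^2}{|\varphi'|^4}+\frac32\frac{|\varphi''|^2}{|\varphi'|^2}$, with Euclidean inner product and norm. *)

theory Defs
  imports "HOL-Analysis.Analysis"
begin

definition vd :: "(real \<Rightarrow> 'a::real_normed_vector) \<Rightarrow> real \<Rightarrow> 'a" where
  "vd f = (\<lambda>x. vector_derivative f (at x))"

definition C3_on :: "(real \<Rightarrow> 'a::real_normed_vector) \<Rightarrow> real set \<Rightarrow> bool" where
  "C3_on f S \<longleftrightarrow>
     (\<forall>x\<in>S. f differentiable (at x)) \<and>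
     (\<forall>x\<in>S. vd f differentiable (at x)) \<and>
     (\<forall>x\<in>S. vd (vd f) differentiable (at x)) \<and>
     continuous_on S (vd (vd (vd f)))"

definition ahlfors_S1 :: "(real \<Rightarrow> 'a::real_inner) \<Rightarrow> real \<Rightarrow> real" where
  "ahlfors_S1 f x =
     (let d1 = vd f x; d2 = vd (vd f) x; d3 = vd (vd (vd f)) x in
       inner d1 d3 / (norm d1)\<^sup>2 - 3 * (inner d1 d2)\<^sup>2 / (norm d1) ^ 4
       + 3 / 2 * (norm d2)\<^sup>2 / (norm d1)\<^sup>2)"

definition hdist :: "real \<Rightarrow> real \<Rightarrow> real" where
  "hdist x1 x2 = \<bar>1/2 * ln ((1 + x1) / (1 - x1)) - 1/2 * ln ((1 + x2) / (1 - x2))\<bar>"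

end

theory Submission
  imports Defs
begin

(* Fix a < b and put D(t) = phi(t) - phi(a).  As long as D does not vanish, the
   ratio u = |D| / |phi'|^(1/2) = exp L, with L = log|D| - (1/4) log|phi'|^2, satisfies
   u'' = (L'^2 + L'') u, and an algebraic identity (a squared norm of a suitable
   combination of D, phi', phi'', phi''') gives L'^2 + L'' + S1 phi / 2 >= 0.
   Hence S1 phi <= 2p makes u a supersolution of y'' + p y = 0.  Sturm comparison
   with the solution y, y(a) = 0, y'(a) = 1 shows u >= |phi'(a)|^(1/2) y.  Since y > 0
   on (a,b], this forces D to have no zero in (a,b], and evaluating at b gives
   |phi(b) - phi(a)| / (|phi'(a)| |phi'(b)|)^(1/2) >= y(b). *)

section \<open>Pointwise algebra\<close>

definition schwarzian_form :: "'a::real_inner \<Rightarrow> 'a \<Rightarrow> 'a \<Rightarrow> real" where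
  "schwarzian_form A B C =
     (A \<bullet> C) / (A \<bullet> A) - 3 * (A \<bullet> B)\<^sup>2 / (A \<bullet> A)\<^sup>2 + 3 / 2 * (B \<bullet> B) / (A \<bullet> A)"

lemma ahlfors_S1_eq_schwarzian_form:
  "ahlfors_S1 \<phi> x = schwarzian_form (vd \<phi> x) (vd (vd \<phi>) x) (vd (vd (vd \<phi>)) x)"
proof -
  have "(norm v) ^ 4 = (v \<bullet> v)\<^sup>2" for v :: 'a
    by (simp add: power2_norm_eq_inner[symmetric] power_mult[symmetric])
  then show ?thesis
    unfolding ahlfors_S1_def schwarzian_form_def Let_def power2_norm_eq_inner by simp
qed

text \<open>With D = phi(t) - phi(a), A = phi', B = phi'', C = phi''', the
  first two summands below are L'^2 and L'' for L = log|D| - (1/2) log|A|; the sum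
  with half the Schwarzian is |V|^2 / (4|A|^2) for an explicit vector V.\<close>
lemma schwarzian_quadratic_bound:
  fixes D A B C :: "'a::real_inner"
  assumes "D \<noteq> 0" "A \<noteq> 0"
  shows "0 \<le> ((D \<bullet> A) / (D \<bullet> D) - (A \<bullet> B) / (2 * (A \<bullet> A)))\<^sup>2
       + ((A \<bullet> A + D \<bullet> B) / (D \<bullet> D) - 2 * (D \<bullet> A)\<^sup>2 / (D \<bullet> D)\<^sup>2
          - (B \<bullet> B + A \<bullet> C) / (2 * (A \<bullet> A)) + (A \<bullet> B)\<^sup>2 / (A \<bullet> A)\<^sup>2)
       + schwarzian_form A B C / 2"
proof -
  define P where "P = D \<bullet> D"
  define Q where "Q = A \<bullet> A"
  define \<alpha> where "\<alpha> = D \<bullet> A"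
  define \<beta> where "\<beta> = D \<bullet> B"
  define m where "m = A \<bullet> B"
  define n where "n = B \<bullet> B"
  define V where "V = B - (m / Q + 2 * \<alpha> / P) *\<^sub>R A + (2 * Q / P) *\<^sub>R D"
  have pos: "P > 0" "Q > 0" using assms by (auto simp: P_def Q_def)
  have "V \<bullet> V = n + (m / Q + 2 * \<alpha> / P)\<^sup>2 * Q + (2 * Q / P)\<^sup>2 * P - 2 * (m / Q + 2 * \<alpha> / P) * m
        + 2 * (2 * Q / P) * \<beta> - 2 * (m / Q + 2 * \<alpha> / P) * (2 * Q / P) * \<alpha>"
    unfolding V_def
    by (simp add: inner_simps P_def Q_def \<alpha>_def \<beta>_def m_def n_def inner_commute
        power2_eq_square algebra_simps)
  also have "\<dots> = 4 * Q * ((\<alpha> / P - m / (2 * Q))\<^sup>2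
       + ((Q + \<beta>) / P - 2 * \<alpha>\<^sup>2 / P\<^sup>2 - (n + A \<bullet> C) / (2 * Q) + m\<^sup>2 / Q\<^sup>2)
       + ((A \<bullet> C) / Q - 3 * m\<^sup>2 / Q\<^sup>2 + 3 / 2 * n / Q) / 2)"
    using pos by (simp add: field_simps power2_eq_square)
  finally have "0 \<le> 4 * Q * ((\<alpha> / P - m / (2 * Q))\<^sup>2
       + ((Q + \<beta>) / P - 2 * \<alpha>\<^sup>2 / P\<^sup>2 - (n + A \<bullet> C) / (2 * Q) + m\<^sup>2 / Q\<^sup>2)
       + ((A \<bullet> C) / Q - 3 * m\<^sup>2 / Q\<^sup>2 + 3 / 2 * n / Q) / 2)"
    by (metis inner_ge_zero)
  with pos have "0 \<le> (\<alpha> / P - m / (2 * Q))\<^sup>2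
       + ((Q + \<beta>) / P - 2 * \<alpha>\<^sup>2 / P\<^sup>2 - (n + A \<bullet> C) / (2 * Q) + m\<^sup>2 / Q\<^sup>2)
       + ((A \<bullet> C) / Q - 3 * m\<^sup>2 / Q\<^sup>2 + 3 / 2 * n / Q) / 2"
    by (simp add: zero_le_mult_iff)
  then show ?thesis
    unfolding schwarzian_form_def P_def Q_def \<alpha>_def \<beta>_def m_def n_def .
qed

lemma ratio_eq_exp_log:
  fixes D A :: "'a::real_inner"
  assumes "D \<noteq> 0" "A \<noteq> 0"
  shows "norm D / sqrt (norm A) = exp (ln (D \<bullet> D) / 2 - ln (A \<bullet> A) / 4)"
proof -
  have "ln (D \<bullet> D) / 2 = ln (norm D)" "ln (A \<bullet> A) / 4 = ln (norm A) / 2"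
    using assms by (simp_all add: power2_norm_eq_inner[symmetric] ln_realpow)
  moreover have "exp (ln (norm A) / 2) = sqrt (norm A)"
    using assms by (simp add: powr_half_sqrt[symmetric] powr_def)
  ultimately show ?thesis
    using assms by (simp add: exp_diff)
qed

lemma has_real_derivative_inner:
  fixes f g :: "real \<Rightarrow> 'a::real_inner"
  assumes "(f has_vector_derivative f') (at t)" "(g has_vector_derivative g') (at t)"
  shows "((\<lambda>x. f x \<bullet> g x) has_real_derivative (f t \<bullet> g' + f' \<bullet> g t)) (at t)"
  using has_derivative_inner[OF assms[unfolded has_vector_derivative_def]]
  unfolding has_field_derivative_def
  by (rule has_derivative_eq_rhs) (auto simp: fun_eq_iff algebra_simps)

lemma isCont_tendsto_at_right: "isCont f a \<Longrightarrow> (f \<longlongrightarrow> f a) (at_right a)"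
  and isCont_tendsto_at_left: "isCont f a \<Longrightarrow> (f \<longlongrightarrow> f a) (at_left a)"
  by (auto simp: isCont_def intro: filterlim_within_subset)

lemma deriv_nonneg_ge_right_limit:
  fixes f f' :: "real \<Rightarrow> real"
  assumes d: "\<And>x. a < x \<Longrightarrow> x < c \<Longrightarrow> (f has_real_derivative f' x) (at x)"
    and nonneg: "\<And>x. a < x \<Longrightarrow> x < c \<Longrightarrow> 0 \<le> f' x"
    and lim: "(f \<longlongrightarrow> l) (at_right a)"
    and t: "a < t" "t < c"
  shows "l \<le> f t"
proof (rule tendsto_le[OF _ tendsto_const lim])
  have "f s \<le> f t" if s: "a < s" "s < t" for s
  proof (rule DERIV_nonneg_imp_increasing_open[of s t f])
    show "\<exists>y. (f has_real_derivative y) (at x) \<and> 0 \<le> y" if "s < x" "x < t" for x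
      using that s t d nonneg by (intro exI[of _ "f' x"]) auto
    show "continuous_on {s..t} f"
      using s t by (intro continuous_at_imp_continuous_on ballI DERIV_isCont[OF d]) auto
  qed (use s in auto)
  then show "\<forall>\<^sub>F s in at_right a. f s \<le> f t"
    unfolding eventually_at_right_field using t by blast
qed simp

text \<open>If u > 0 is a supersolution of y'' + p y = 0 on (a,c) and y > 0
  a solution, both vanishing at a (in the sense of the limits below) with u/y -> K,
  then the Wronskian u' y - u y' increases from 0, so u/y increases from K.\<close>
lemma sturm_comparison:
  fixes u u1 u2 y y1 p :: "real \<Rightarrow> real"
  assumes ac: "a < c"
    and du: "\<And>t. a < t \<Longrightarrow> t < c \<Longrightarrow> (u has_real_derivative u1 t) (at t)"
    and du1: "\<And>t. a < t \<Longrightarrow> t < c \<Longrightarrow> (u1 has_real_derivative u2 t) (at t)"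
    and super: "\<And>t. a < t \<Longrightarrow> t < c \<Longrightarrow> 0 \<le> u2 t + p t * u t"
    and dy: "\<And>t. a < t \<Longrightarrow> t < c \<Longrightarrow> (y has_real_derivative y1 t) (at t)"
    and dy1: "\<And>t. a < t \<Longrightarrow> t < c \<Longrightarrow> (y1 has_real_derivative - p t * y t) (at t)"
    and upos: "\<And>t. a < t \<Longrightarrow> t < c \<Longrightarrow> 0 < u t"
    and ypos: "\<And>t. a < t \<Longrightarrow> t < c \<Longrightarrow> 0 < y t"
    and lim_u: "(u \<longlongrightarrow> 0) (at_right a)"
    and lim_uu1: "((\<lambda>t. u t * u1 t) \<longlongrightarrow> 0) (at_right a)"
    and lim_y1: "(y1 \<longlongrightarrow> l) (at_right a)"
    and lim_ratio: "((\<lambda>t. u t / y t) \<longlongrightarrow> K) (at_right a)" and K: "K > 0"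
    and t: "a < t" "t < c"
  shows "K * y t \<le> u t"
proof -
  define W where "W t = u1 t * y t - u t * y1 t" for t
  have dW: "(W has_real_derivative y t * (u2 t + p t * u t)) (at t)" if "a < t" "t < c" for t
    unfolding W_def
    by (rule derivative_eq_intros du du1 dy dy1 that refl)+ (simp add: algebra_simps)
  have "((\<lambda>t. u t * u1 t * inverse (u t / y t) - u t * y1 t) \<longlongrightarrow> 0 * inverse K - 0 * l)
          (at_right a)"
    by (intro tendsto_intros lim_uu1 lim_ratio lim_u lim_y1) (use K in auto)
  moreover have "\<forall>\<^sub>F t in at_right a. u t * u1 t * inverse (u t / y t) - u t * y1 t = W t"
    unfolding eventually_at_right_field
  proof (intro exI[of _ c] conjI allI impI ac)
    fix t assume "a < t" "t < c"
    then have "u t \<noteq> 0" using upos by force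
    then show "u t * u1 t * inverse (u t / y t) - u t * y1 t = W t"
      by (simp add: W_def)
  qed
  ultimately have lim_W: "(W \<longlongrightarrow> 0) (at_right a)"
    by (simp add: tendsto_cong)
  have W_nonneg: "0 \<le> W s" if "a < s" "s < c" for s
    by (rule deriv_nonneg_ge_right_limit[OF dW _ lim_W that])
       (use ypos super in \<open>auto intro: mult_nonneg_nonneg less_imp_le\<close>)
  have d_ratio: "((\<lambda>t. u t / y t) has_real_derivative W t / (y t)\<^sup>2) (at t)"
    if "a < t" "t < c" for t
    using ypos[OF that]
    by (auto intro!: derivative_eq_intros du dy that simp: W_def power2_eq_square field_simps)
  have "K \<le> u t / y t"
    using deriv_nonneg_ge_right_limit[OF d_ratio _ lim_ratio t] W_nonneg by simp
  then show ?thesis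
    using ypos[OF t] by (simp add: field_simps)
qed

section \<open>The distortion ratio is a supersolution\<close>

lemma log_ratio_derivatives:
  fixes D A B C :: "real \<Rightarrow> 'a::real_inner"
  assumes dD: "(D has_vector_derivative A t) (at t)"
    and dA: "(A has_vector_derivative B t) (at t)"
    and dB: "(B has_vector_derivative C t) (at t)"
    and nz: "D t \<noteq> 0" "A t \<noteq> 0"
  defines "L1 \<equiv> \<lambda>s. (D s \<bullet> A s) / (D s \<bullet> D s) - (A s \<bullet> B s) / (2 * (A s \<bullet> A s))"
  shows "((\<lambda>s. ln (D s \<bullet> D s) / 2 - ln (A s \<bullet> A s) / 4) has_real_derivative L1 t) (at t)"
    and "(L1 has_real_derivative
           (A t \<bullet> A t + D t \<bullet> B t) / (D t \<bullet> D t) - 2 * (D t \<bullet> A t)\<^sup>2 / (D t \<bullet> D t)\<^sup>2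
           - (B t \<bullet> B t + A t \<bullet> C t) / (2 * (A t \<bullet> A t)) + (A t \<bullet> B t)\<^sup>2 / (A t \<bullet> A t)\<^sup>2) (at t)"
proof -
  have pos: "D t \<bullet> D t > 0" "A t \<bullet> A t > 0" using nz by auto
  have dP: "((\<lambda>s. D s \<bullet> D s) has_real_derivative 2 * (D t \<bullet> A t)) (at t)"
    using has_real_derivative_inner[OF dD dD] by (simp add: inner_commute)
  have dQ: "((\<lambda>s. A s \<bullet> A s) has_real_derivative 2 * (A t \<bullet> B t)) (at t)"
    using has_real_derivative_inner[OF dA dA] by (simp add: inner_commute)
  have d\<alpha>: "((\<lambda>s. D s \<bullet> A s) has_real_derivative A t \<bullet> A t + D t \<bullet> B t) (at t)"
    using has_real_derivative_inner[OF dD dA] by (simp add: algebra_simps)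
  have dm: "((\<lambda>s. A s \<bullet> B s) has_real_derivative B t \<bullet> B t + A t \<bullet> C t) (at t)"
    using has_real_derivative_inner[OF dA dB] by (simp add: algebra_simps)
  show "((\<lambda>s. ln (D s \<bullet> D s) / 2 - ln (A s \<bullet> A s) / 4) has_real_derivative L1 t) (at t)"
    unfolding L1_def
    by (rule derivative_eq_intros dP dQ refl | simp add: nz)+
  show "(L1 has_real_derivative
           (A t \<bullet> A t + D t \<bullet> B t) / (D t \<bullet> D t) - 2 * (D t \<bullet> A t)\<^sup>2 / (D t \<bullet> D t)\<^sup>2
           - (B t \<bullet> B t + A t \<bullet> C t) / (2 * (A t \<bullet> A t)) + (A t \<bullet> B t)\<^sup>2 / (A t \<bullet> A t)\<^sup>2) (at t)"
    unfolding L1_def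
    by (rule derivative_eq_intros dP dQ d\<alpha> dm refl | simp add: nz)+
       (simp add: field_simps power2_eq_square nz)
qed

lemma distortion_ratio_supersolution:
  fixes D A B C :: "real \<Rightarrow> 'a::real_inner" and p :: "real \<Rightarrow> real"
  assumes I: "open I"
    and dD: "\<And>t. t \<in> I \<Longrightarrow> (D has_vector_derivative A t) (at t)"
    and dA: "\<And>t. t \<in> I \<Longrightarrow> (A has_vector_derivative B t) (at t)"
    and dB: "\<And>t. t \<in> I \<Longrightarrow> (B has_vector_derivative C t) (at t)"
    and nzD: "\<And>t. t \<in> I \<Longrightarrow> D t \<noteq> 0" and nzA: "\<And>t. t \<in> I \<Longrightarrow> A t \<noteq> 0"
    and S: "\<And>t. t \<in> I \<Longrightarrow> schwarzian_form (A t) (B t) (C t) \<le> 2 * p t"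
  defines "u \<equiv> \<lambda>t. norm (D t) / sqrt (norm (A t))"
    and "L1 \<equiv> \<lambda>s. (D s \<bullet> A s) / (D s \<bullet> D s) - (A s \<bullet> B s) / (2 * (A s \<bullet> A s))"
  shows "\<exists>u2. \<forall>t\<in>I. (u has_real_derivative u t * L1 t) (at t)
           \<and> ((\<lambda>s. u s * L1 s) has_real_derivative u2 t) (at t) \<and> 0 \<le> u2 t + p t * u t"
proof -
  define L where "L = (\<lambda>s. ln (D s \<bullet> D s) / 2 - ln (A s \<bullet> A s) / 4)"
  define L2 where "L2 = (\<lambda>t. (A t \<bullet> A t + D t \<bullet> B t) / (D t \<bullet> D t) - 2 * (D t \<bullet> A t)\<^sup>2 / (D t \<bullet> D t)\<^sup>2
           - (B t \<bullet> B t + A t \<bullet> C t) / (2 * (A t \<bullet> A t)) + (A t \<bullet> B t)\<^sup>2 / (A t \<bullet> A t)\<^sup>2)"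
  have derivs: "(L has_real_derivative L1 t) (at t)" "(L1 has_real_derivative L2 t) (at t)"
    if "t \<in> I" for t
    using log_ratio_derivatives[of D A t B C, OF dD[OF that] dA[OF that] dB[OF that]
        nzD[OF that] nzA[OF that]]
    unfolding L_def L1_def L2_def by blast+
  have u_exp: "u t = exp (L t)" if "t \<in> I" for t
    using ratio_eq_exp_log[OF nzD nzA, OF that that] by (simp add: u_def L_def)
  have du: "(u has_real_derivative u t * L1 t) (at t)" if t: "t \<in> I" for t
  proof (rule has_field_derivative_transform_within_open[OF _ I t])
    show "((\<lambda>s. exp (L s)) has_real_derivative u t * L1 t) (at t)"
      by (rule derivative_eq_intros derivs(1)[OF t] refl)+ (simp add: u_exp[OF t])
  qed (simp add: u_exp)
  have du1: "((\<lambda>s. u s * L1 s) has_real_derivative u t * ((L1 t)\<^sup>2 + L2 t)) (at t)"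
    if t: "t \<in> I" for t
    by (rule derivative_eq_intros du[OF t] derivs(2)[OF t] refl)+
       (simp add: algebra_simps power2_eq_square)
  have super: "0 \<le> u t * ((L1 t)\<^sup>2 + L2 t) + p t * u t" if t: "t \<in> I" for t
  proof -
    have "0 \<le> (L1 t)\<^sup>2 + L2 t + schwarzian_form (A t) (B t) (C t) / 2"
      using schwarzian_quadratic_bound[OF nzD[OF t] nzA[OF t]] by (simp add: L1_def L2_def)
    with S[OF t] have "0 \<le> (L1 t)\<^sup>2 + L2 t + p t" by linarith
    moreover have "0 \<le> u t" by (simp add: u_def)
    ultimately show ?thesis
      by (metis distrib_left mult.commute mult_nonneg_nonneg)
  qed
  show ?thesis
    using du du1 super by (intro exI[of _ "\<lambda>t. u t * ((L1 t)\<^sup>2 + L2 t)"]) blast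
qed

lemma norm_difference_quotient:
  fixes \<phi> :: "real \<Rightarrow> 'a::real_normed_vector"
  assumes "(\<phi> has_vector_derivative v) (at a)"
  shows "((\<lambda>t. norm (\<phi> t - \<phi> a) / (t - a)) \<longlongrightarrow> norm v) (at_right a)"
proof -
  have "((\<lambda>t. norm (\<phi> t - \<phi> a - (t - a) *\<^sub>R v) / norm (t - a)) \<longlongrightarrow> 0) (at a)"
    using assms unfolding has_vector_derivative_def has_derivative_iff_norm by auto
  then have err: "((\<lambda>t. norm (\<phi> t - \<phi> a - (t - a) *\<^sub>R v) / norm (t - a)) \<longlongrightarrow> 0) (at_right a)"
    by (rule filterlim_within_subset) simp
  have "((\<lambda>t. norm (\<phi> t - \<phi> a) / (t - a) - norm v) \<longlongrightarrow> 0) (at_right a)"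
  proof (rule Lim_null_comparison[OF _ err])
    have bound: "norm (norm (\<phi> t - \<phi> a) / (t - a) - norm v)
          \<le> norm (\<phi> t - \<phi> a - (t - a) *\<^sub>R v) / norm (t - a)" if t: "a < t" for t
    proof -
      have "norm ((t - a) *\<^sub>R v) = (t - a) * norm v"
        using t by simp
      then have "norm (norm (\<phi> t - \<phi> a) / (t - a) - norm v)
          = \<bar>norm (\<phi> t - \<phi> a) - norm ((t - a) *\<^sub>R v)\<bar> / (t - a)"
        using t by (simp add: field_simps)
      also have "\<dots> \<le> norm (\<phi> t - \<phi> a - (t - a) *\<^sub>R v) / (t - a)"
        using t by (intro divide_right_mono norm_triangle_ineq3) auto
      finally show ?thesis using t by simp
    qed
    then show "\<forall>\<^sub>F t in at_right a. norm (norm (\<phi> t - \<phi> a) / (t - a) - norm v)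
          \<le> norm (\<phi> t - \<phi> a - (t - a) *\<^sub>R v) / norm (t - a)"
      unfolding eventually_at_right_field
      by (intro exI[of _ "a + 1"] conjI allI impI bound) simp_all
  qed
  then show ?thesis by (simp add: LIM_zero_iff)
qed

lemma distortion_ratio_at_start:
  fixes \<phi> \<phi>1 :: "real \<Rightarrow> 'a::real_normed_vector" and y :: "real \<Rightarrow> real"
  assumes d\<phi>: "(\<phi> has_vector_derivative \<phi>1 a) (at a)" and cont: "isCont \<phi>1 a"
    and nz: "\<phi>1 a \<noteq> 0"
    and dy: "(y has_real_derivative 1) (at a)" and ya: "y a = 0"
  shows "((\<lambda>t. norm (\<phi> t - \<phi> a) / sqrt (norm (\<phi>1 t)) / y t) \<longlongrightarrow> sqrt (norm (\<phi>1 a)))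
           (at_right a)"
proof -
  have "((\<lambda>t. y t / (t - a)) \<longlongrightarrow> 1) (at a)"
    using dy ya unfolding has_field_derivative_iff by simp
  then have y_quot: "((\<lambda>t. y t / (t - a)) \<longlongrightarrow> 1) (at_right a)"
    by (rule filterlim_within_subset) simp
  have "((\<lambda>t. norm (\<phi> t - \<phi> a) / (t - a) / sqrt (norm (\<phi>1 t)) / (y t / (t - a)))
          \<longlongrightarrow> norm (\<phi>1 a) / sqrt (norm (\<phi>1 a)) / 1) (at_right a)"
    by (intro tendsto_intros norm_difference_quotient d\<phi> isCont_tendsto_at_right cont y_quot)
       (use nz in auto)
  moreover have "\<forall>\<^sub>F t in at_right a.
      norm (\<phi> t - \<phi> a) / (t - a) / sqrt (norm (\<phi>1 t)) / (y t / (t - a))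
        = norm (\<phi> t - \<phi> a) / sqrt (norm (\<phi>1 t)) / y t"
    by (simp add: eventually_at_right_less eventually_mono)
  ultimately show ?thesis
    by (simp add: tendsto_cong real_div_sqrt)
qed

text \<open>The product u u' = u^2 L' in a form which is continuous also where D vanishes.\<close>
lemma ratio_times_derivative:
  fixes D A B :: "'a::real_inner"
  assumes "D \<noteq> 0" "A \<noteq> 0"
  shows "norm D / sqrt (norm A) * (norm D / sqrt (norm A)
           * ((D \<bullet> A) / (D \<bullet> D) - (A \<bullet> B) / (2 * (A \<bullet> A))))
         = (D \<bullet> A) / norm A - (norm D)\<^sup>2 * (A \<bullet> B) / (2 * norm A ^ 3)"
proof -
  define r where "r = sqrt (norm A)"
  have pos: "norm D > 0" "r > 0" and A_eq: "norm A = r\<^sup>2"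
    using assms by (auto simp: r_def)
  show ?thesis
    unfolding power2_norm_eq_inner[symmetric] r_def[symmetric] A_eq
    using pos by (simp add: field_simps power2_eq_square power3_eq_cube)
qed

lemma distortion_ratio_vanishes_at_start:
  fixes \<phi> \<phi>1 \<phi>2 :: "real \<Rightarrow> 'a::real_inner"
  assumes cont: "isCont \<phi> a" "isCont \<phi>1 a" "isCont \<phi>2 a" and nz: "\<phi>1 a \<noteq> 0"
    and away: "\<forall>\<^sub>F t in at_right a. \<phi> t \<noteq> \<phi> a \<and> \<phi>1 t \<noteq> 0"
  defines "u \<equiv> \<lambda>t. norm (\<phi> t - \<phi> a) / sqrt (norm (\<phi>1 t))"
    and "L1 \<equiv> \<lambda>s. ((\<phi> s - \<phi> a) \<bullet> \<phi>1 s) / ((\<phi> s - \<phi> a) \<bullet> (\<phi> s - \<phi> a))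
                 - (\<phi>1 s \<bullet> \<phi>2 s) / (2 * (\<phi>1 s \<bullet> \<phi>1 s))"
  shows "(u \<longlongrightarrow> 0) (at_right a)"
    and "((\<lambda>t. u t * (u t * L1 t)) \<longlongrightarrow> 0) (at_right a)"
proof -
  have "(u \<longlongrightarrow> norm (\<phi> a - \<phi> a) / sqrt (norm (\<phi>1 a))) (at_right a)"
    unfolding u_def
    by (intro tendsto_intros isCont_tendsto_at_right cont) (use nz in auto)
  then show "(u \<longlongrightarrow> 0) (at_right a)" by simp
  have "((\<lambda>t. ((\<phi> t - \<phi> a) \<bullet> \<phi>1 t) / norm (\<phi>1 t)
              - (norm (\<phi> t - \<phi> a))\<^sup>2 * (\<phi>1 t \<bullet> \<phi>2 t) / (2 * norm (\<phi>1 t) ^ 3))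
         \<longlongrightarrow> ((\<phi> a - \<phi> a) \<bullet> \<phi>1 a) / norm (\<phi>1 a)
              - (norm (\<phi> a - \<phi> a))\<^sup>2 * (\<phi>1 a \<bullet> \<phi>2 a) / (2 * norm (\<phi>1 a) ^ 3)) (at_right a)"
    by (intro tendsto_intros isCont_tendsto_at_right cont) (use nz in auto)
  moreover have "\<forall>\<^sub>F t in at_right a. ((\<phi> t - \<phi> a) \<bullet> \<phi>1 t) / norm (\<phi>1 t)
              - (norm (\<phi> t - \<phi> a))\<^sup>2 * (\<phi>1 t \<bullet> \<phi>2 t) / (2 * norm (\<phi>1 t) ^ 3)
            = u t * (u t * L1 t)"
    using away
    by eventually_elim (unfold u_def L1_def, rule ratio_times_derivative[symmetric], auto)
  ultimately show "((\<lambda>t. u t * (u t * L1 t)) \<longlongrightarrow> 0) (at_right a)"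
    by (simp add: tendsto_cong)
qed

lemma first_return:
  fixes f :: "real \<Rightarrow> 'a::t2_space"
  assumes cont: "continuous_on {a..t} f"
    and near: "\<forall>\<^sub>F s in at_right a. f s \<noteq> f a"
    and t: "a < t" "f t = f a"
  shows "\<exists>t0. a < t0 \<and> t0 \<le> t \<and> f t0 = f a \<and> (\<forall>s. a < s \<longrightarrow> s < t0 \<longrightarrow> f s \<noteq> f a)"
proof -
  obtain e where e: "a < e" "\<And>s. a < s \<Longrightarrow> s < e \<Longrightarrow> f s \<noteq> f a"
    using near unfolding eventually_at_right_field by auto
  define e0 where "e0 = min ((a + e) / 2) t"
  have e0: "a < e0" "e0 \<le> t" "e0 < e"
    using e(1) t unfolding e0_def by (auto simp: min_def)
  define Z where "Z = {s \<in> {e0..t}. f s = f a}"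
  have "closed Z"
    unfolding Z_def
    by (rule continuous_closed_preimage_constant)
       (use e0 t in \<open>auto intro: continuous_on_subset[OF cont]\<close>)
  moreover have "t \<in> Z" "bdd_below Z"
    using e0 t by (auto simp: Z_def)
  ultimately have Inf_Z: "Inf Z \<in> Z"
    by (intro closed_contains_Inf) auto
  have "f s \<noteq> f a" if "a < s" "s < Inf Z" for s
  proof (cases "s < e0")
    case True
    then show ?thesis using e(2) that e0 by auto
  next
    case False
    then have "s \<notin> Z"
      using that cInf_lower[OF _ \<open>bdd_below Z\<close>, of s] by fastforce
    then show ?thesis
      using False that Inf_Z by (auto simp: Z_def)
  qed
  then show ?thesis
    using Inf_Z e0 by (intro exI[of _ "Inf Z"]) (auto simp: Z_def)
qed

section \<open>Two-point comparison for a curve\<close>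

lemma distortion_until_return:
  fixes \<phi> \<phi>1 \<phi>2 \<phi>3 :: "real \<Rightarrow> 'a::real_inner" and y y1 p :: "real \<Rightarrow> real"
  assumes ac: "a < c"
    and d0: "\<And>t. a \<le> t \<Longrightarrow> t \<le> c \<Longrightarrow> (\<phi> has_vector_derivative \<phi>1 t) (at t)"
    and d1: "\<And>t. a \<le> t \<Longrightarrow> t \<le> c \<Longrightarrow> (\<phi>1 has_vector_derivative \<phi>2 t) (at t)"
    and d2: "\<And>t. a \<le> t \<Longrightarrow> t \<le> c \<Longrightarrow> (\<phi>2 has_vector_derivative \<phi>3 t) (at t)"
    and nz: "\<And>t. a \<le> t \<Longrightarrow> t \<le> c \<Longrightarrow> \<phi>1 t \<noteq> 0"
    and S: "\<And>t. a \<le> t \<Longrightarrow> t \<le> c \<Longrightarrow> schwarzian_form (\<phi>1 t) (\<phi>2 t) (\<phi>3 t) \<le> 2 * p t"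
    and dy: "\<And>t. a \<le> t \<Longrightarrow> t \<le> c \<Longrightarrow> (y has_real_derivative y1 t) (at t)"
    and dy1: "\<And>t. a \<le> t \<Longrightarrow> t \<le> c \<Longrightarrow> (y1 has_real_derivative - p t * y t) (at t)"
    and ya: "y a = 0" and y1a: "y1 a = 1"
    and ypos: "\<And>t. a < t \<Longrightarrow> t \<le> c \<Longrightarrow> 0 < y t"
    and no_return: "\<And>t. a < t \<Longrightarrow> t < c \<Longrightarrow> \<phi> t \<noteq> \<phi> a"
  shows "sqrt (norm (\<phi>1 a)) * y c \<le> norm (\<phi> c - \<phi> a) / sqrt (norm (\<phi>1 c))"
proof -
  define u where "u = (\<lambda>t. norm (\<phi> t - \<phi> a) / sqrt (norm (\<phi>1 t)))"
  define L1 where "L1 = (\<lambda>s. ((\<phi> s - \<phi> a) \<bullet> \<phi>1 s) / ((\<phi> s - \<phi> a) \<bullet> (\<phi> s - \<phi> a))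
                          - (\<phi>1 s \<bullet> \<phi>2 s) / (2 * (\<phi>1 s \<bullet> \<phi>1 s)))"
  have a: "a \<le> a" "a \<le> c" and c: "a \<le> c" "c \<le> c" using ac by auto
  have cont: "isCont \<phi> t" "isCont \<phi>1 t" "isCont \<phi>2 t" "isCont y t" "isCont y1 t"
    if "a \<le> t" "t \<le> c" for t
    using d0[OF that] d1[OF that] d2[OF that] dy[OF that] dy1[OF that]
    by (auto intro: has_vector_derivative_continuous DERIV_isCont)
  have dD: "((\<lambda>s. \<phi> s - \<phi> a) has_vector_derivative \<phi>1 t) (at t)" if "a \<le> t" "t \<le> c" for t
    using d0[OF that] by (auto intro!: derivative_eq_intros)
  have "\<exists>u2. \<forall>t\<in>{a<..<c}. (u has_real_derivative u t * L1 t) (at t)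
      \<and> ((\<lambda>s. u s * L1 s) has_real_derivative u2 t) (at t) \<and> 0 \<le> u2 t + p t * u t"
    unfolding u_def L1_def
    by (rule distortion_ratio_supersolution[where C = \<phi>3])
       (use dD d1 d2 nz S no_return in auto)
  then obtain u2 where u2: "\<And>t. t \<in> {a<..<c} \<Longrightarrow> (u has_real_derivative u t * L1 t) (at t)
      \<and> ((\<lambda>s. u s * L1 s) has_real_derivative u2 t) (at t) \<and> 0 \<le> u2 t + p t * u t"
    by blast
  have "\<forall>\<^sub>F t in at_right a. \<phi> t \<noteq> \<phi> a \<and> \<phi>1 t \<noteq> 0"
    unfolding eventually_at_right_field
    by (intro exI[of _ c]) (use ac nz no_return in auto)
  then have lim_u: "(u \<longlongrightarrow> 0) (at_right a)"
    and lim_uu1: "((\<lambda>t. u t * (u t * L1 t)) \<longlongrightarrow> 0) (at_right a)"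
    unfolding u_def L1_def
    using distortion_ratio_vanishes_at_start[OF cont(1-3)[OF a] nz[OF a]] by blast+
  have lim_ratio: "((\<lambda>t. u t / y t) \<longlongrightarrow> sqrt (norm (\<phi>1 a))) (at_right a)"
    unfolding u_def
    by (rule distortion_ratio_at_start[of \<phi> \<phi>1 a y, OF d0[OF a] cont(2)[OF a] nz[OF a] _ ya])
       (use dy[OF a] y1a in simp)
  have upos: "0 < u t" if "a < t" "t < c" for t
    using no_return[OF that] nz[of t] that by (simp add: u_def)
  have below: "sqrt (norm (\<phi>1 a)) * y t \<le> u t" if "a < t" "t < c" for t
    by (rule sturm_comparison[OF ac _ _ _ dy dy1 _ _ lim_u lim_uu1
          isCont_tendsto_at_right[OF cont(5)[OF a]] lim_ratio])
       (use that u2 ypos upos nz[OF a] in auto)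
  have "((\<lambda>t. u t - sqrt (norm (\<phi>1 a)) * y t) \<longlongrightarrow> u c - sqrt (norm (\<phi>1 a)) * y c) (at_left c)"
    unfolding u_def
    by (intro tendsto_intros isCont_tendsto_at_left cont[OF c]) (use nz[OF c] in auto)
  then have "0 \<le> u c - sqrt (norm (\<phi>1 a)) * y c"
    by (rule tendsto_lowerbound)
       (use ac below in \<open>auto simp: eventually_at_left_field intro!: exI[of _ a]\<close>)
  then show ?thesis by (simp add: u_def)
qed

text \<open>The comparison theorem: phi never returns to phi(a) on (a,b], since at a first
  return the ratio would vanish while the Sturm bound keeps it positive.\<close>
lemma distortion_comparison:
  fixes \<phi> \<phi>1 \<phi>2 \<phi>3 :: "real \<Rightarrow> 'a::real_inner" and y y1 p :: "real \<Rightarrow> real"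
  assumes ab: "a < b"
    and d0: "\<And>t. a \<le> t \<Longrightarrow> t \<le> b \<Longrightarrow> (\<phi> has_vector_derivative \<phi>1 t) (at t)"
    and d1: "\<And>t. a \<le> t \<Longrightarrow> t \<le> b \<Longrightarrow> (\<phi>1 has_vector_derivative \<phi>2 t) (at t)"
    and d2: "\<And>t. a \<le> t \<Longrightarrow> t \<le> b \<Longrightarrow> (\<phi>2 has_vector_derivative \<phi>3 t) (at t)"
    and nz: "\<And>t. a \<le> t \<Longrightarrow> t \<le> b \<Longrightarrow> \<phi>1 t \<noteq> 0"
    and S: "\<And>t. a \<le> t \<Longrightarrow> t \<le> b \<Longrightarrow> schwarzian_form (\<phi>1 t) (\<phi>2 t) (\<phi>3 t) \<le> 2 * p t"
    and dy: "\<And>t. a \<le> t \<Longrightarrow> t \<le> b \<Longrightarrow> (y has_real_derivative y1 t) (at t)"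
    and dy1: "\<And>t. a \<le> t \<Longrightarrow> t \<le> b \<Longrightarrow> (y1 has_real_derivative - p t * y t) (at t)"
    and ya: "y a = 0" and y1a: "y1 a = 1"
    and ypos: "\<And>t. a < t \<Longrightarrow> t \<le> b \<Longrightarrow> 0 < y t"
  shows "y b \<le> norm (\<phi> b - \<phi> a) / sqrt (norm (\<phi>1 a) * norm (\<phi>1 b))"
proof -
  have bound: "sqrt (norm (\<phi>1 a)) * y c \<le> norm (\<phi> c - \<phi> a) / sqrt (norm (\<phi>1 c))"
    if "a < c" "c \<le> b" "\<And>t. a < t \<Longrightarrow> t < c \<Longrightarrow> \<phi> t \<noteq> \<phi> a" for c
    by (rule distortion_until_return[where ?\<phi>2.0 = \<phi>2 and ?\<phi>3.0 = \<phi>3 and p = p and ?y1.0 = y1])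
       (use that assms in auto)
  have na: "0 < norm (\<phi>1 a)" using nz[of a] ab by simp
  have "\<forall>\<^sub>F t in at_right a. 0 < norm (\<phi> t - \<phi> a) / (t - a)"
    using ab by (intro order_tendstoD(1)[OF norm_difference_quotient[OF d0] na]) auto
  then have near: "\<forall>\<^sub>F t in at_right a. \<phi> t \<noteq> \<phi> a"
    by (rule eventually_mono) auto
  have no_return: "\<phi> t \<noteq> \<phi> a" if t: "a < t" "t < b" for t
  proof
    assume "\<phi> t = \<phi> a"
    moreover have "continuous_on {a..t} \<phi>"
      using t d0
      by (intro continuous_at_imp_continuous_on ballI has_vector_derivative_continuous[OF d0]) auto
    ultimately obtain t0 where t0: "a < t0" "t0 \<le> t" "\<phi> t0 = \<phi> a"
        "\<And>s. a < s \<Longrightarrow> s < t0 \<Longrightarrow> \<phi> s \<noteq> \<phi> a"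
      using first_return[OF _ near t(1)] by blast
    then have "sqrt (norm (\<phi>1 a)) * y t0 \<le> 0"
      using bound[of t0] t by simp
    moreover have "0 < sqrt (norm (\<phi>1 a)) * y t0"
      using na ypos[of t0] t0 t by simp
    ultimately show False by simp
  qed
  have below: "y b * sqrt (norm (\<phi>1 a)) \<le> norm (\<phi> b - \<phi> a) / sqrt (norm (\<phi>1 b))"
    using bound[of b] ab no_return by (simp add: mult.commute)
  have split: "norm (\<phi> b - \<phi> a) / sqrt (norm (\<phi>1 a) * norm (\<phi>1 b))
      = norm (\<phi> b - \<phi> a) / sqrt (norm (\<phi>1 b)) / sqrt (norm (\<phi>1 a))"
    by (simp add: real_sqrt_mult mult.commute)
  have "0 < sqrt (norm (\<phi>1 a))" using na by simp
  then show ?thesis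
    unfolding split by (simp only: pos_le_divide_eq below)
qed

lemma C3_on_has_vector_derivatives:
  fixes \<phi> :: "real \<Rightarrow> 'a::real_normed_vector"
  assumes "C3_on \<phi> S" "x \<in> S"
  shows "(\<phi> has_vector_derivative vd \<phi> x) (at x)"
    and "(vd \<phi> has_vector_derivative vd (vd \<phi>) x) (at x)"
    and "(vd (vd \<phi>) has_vector_derivative vd (vd (vd \<phi>)) x) (at x)"
  using assms unfolding C3_on_def vd_def
  by (auto intro!: vector_derivative_works[THEN iffD1])

lemma curve_two_point_bound:
  fixes \<phi> :: "real \<Rightarrow> 'a::real_inner" and y y1 p :: "real \<Rightarrow> real"
  assumes C3: "C3_on \<phi> {-1<..<1}" and nz: "\<forall>x\<in>{-1<..<1}. vd \<phi> x \<noteq> 0"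
    and S: "\<And>x. -1 < x \<Longrightarrow> x < 1 \<Longrightarrow> ahlfors_S1 \<phi> x \<le> 2 * p x"
    and ab: "-1 < a" "a < b" "b < 1"
    and dy: "\<And>t. a \<le> t \<Longrightarrow> t \<le> b \<Longrightarrow> (y has_real_derivative y1 t) (at t)"
    and dy1: "\<And>t. a \<le> t \<Longrightarrow> t \<le> b \<Longrightarrow> (y1 has_real_derivative - p t * y t) (at t)"
    and ya: "y a = 0" and y1a: "y1 a = 1"
    and ypos: "\<And>t. a < t \<Longrightarrow> t \<le> b \<Longrightarrow> 0 < y t"
  shows "y b \<le> norm (\<phi> a - \<phi> b) / sqrt (norm (vd \<phi> a) * norm (vd \<phi> b))"
proof -
  have "y b \<le> norm (\<phi> b - \<phi> a) / sqrt (norm (vd \<phi> a) * norm (vd \<phi> b))"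
  proof (rule distortion_comparison[OF ab(2) _ _ _ _ _ dy dy1 ya y1a ypos])
    fix t assume "a \<le> t" "t \<le> b"
    then have t: "t \<in> {-1<..<1}" using ab by auto
    show "(\<phi> has_vector_derivative vd \<phi> t) (at t)"
      and "(vd \<phi> has_vector_derivative vd (vd \<phi>) t) (at t)"
      and "(vd (vd \<phi>) has_vector_derivative vd (vd (vd \<phi>)) t) (at t)"
      using C3_on_has_vector_derivatives[OF C3 t] by blast+
    show "vd \<phi> t \<noteq> 0" using nz t by blast
    show "schwarzian_form (vd \<phi> t) (vd (vd \<phi>) t) (vd (vd (vd \<phi>)) t) \<le> 2 * p t"
      using S t by (simp add: ahlfors_S1_eq_schwarzian_form)
  qed
  then show ?thesis by (simp add: norm_minus_commute)
qed

lemma symmetric_two_point_bound: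
  fixes B F :: "real \<Rightarrow> real \<Rightarrow> real"
  assumes ordered: "\<And>a b. -1 < a \<Longrightarrow> a < b \<Longrightarrow> b < 1 \<Longrightarrow> B a b \<le> F a b"
    and symB: "\<And>a b. B a b = B b a" and symF: "\<And>a b. F a b = F b a"
    and diag: "\<And>x. B x x \<le> F x x"
  shows "\<forall>x1\<in>{-1<..<1}. \<forall>x2\<in>{-1<..<1}. F x1 x2 \<ge> B x1 x2"
proof (intro ballI)
  fix x1 x2 :: real assume "x1 \<in> {-1<..<1}" "x2 \<in> {-1<..<1}"
  then show "F x1 x2 \<ge> B x1 x2"
    using ordered[of x1 x2] ordered[of x2 x1] diag[of x1] symB[of x1 x2] symF[of x1 x2]
    by (cases x1 x2 rule: linorder_cases) auto
qed

section \<open>The two comparison equations\<close>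

lemma sine_comparison_solution:
  fixes a t :: real
  shows "((\<lambda>t. 2 / pi * sin (pi / 2 * (t - a))) has_real_derivative cos (pi / 2 * (t - a))) (at t)"
    and "((\<lambda>t. cos (pi / 2 * (t - a))) has_real_derivative
           - (pi\<^sup>2 / 4) * (2 / pi * sin (pi / 2 * (t - a)))) (at t)"
    and "a < t \<Longrightarrow> t < a + 2 \<Longrightarrow> 0 < 2 / pi * sin (pi / 2 * (t - a))"
proof -
  show "((\<lambda>t. 2 / pi * sin (pi / 2 * (t - a))) has_real_derivative cos (pi / 2 * (t - a))) (at t)"
    by (auto intro!: derivative_eq_intros)
  show "((\<lambda>t. cos (pi / 2 * (t - a))) has_real_derivative
           - (pi\<^sup>2 / 4) * (2 / pi * sin (pi / 2 * (t - a)))) (at t)"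
    by (auto intro!: derivative_eq_intros simp: power2_eq_square)
  assume "a < t" "t < a + 2"
  then have "0 < pi / 2 * (t - a)" "pi / 2 * (t - a) < pi / 2 * 2"
    by (auto intro: mult_strict_left_mono)
  then show "0 < 2 / pi * sin (pi / 2 * (t - a))"
    by (simp add: sin_gt_zero)
qed

lemma hdist_eq_artanh: "hdist x1 x2 = \<bar>artanh x1 - artanh x2\<bar>"
  by (simp add: hdist_def artanh_def)

lemma artanh_strict_mono:
  fixes s t :: real
  assumes "-1 < s" "s < t" "t < 1"
  shows "artanh s < artanh t"
proof -
  have "(1 + s) * (1 - t) < (1 + t) * (1 - s)" using assms by (simp add: algebra_simps)
  then have "(1 + s) / (1 - s) < (1 + t) / (1 - t)" using assms by (simp add: divide_simps)
  moreover have "0 < (1 + s) / (1 - s)" using assms by simp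
  ultimately show ?thesis unfolding artanh_def by simp
qed

lemma hyperbolic_comparison_solution:
  fixes a t C :: real
  assumes t: "-1 < t" "t < 1"
  shows "((\<lambda>t. C * sqrt (1 - t\<^sup>2) * (artanh t - artanh a)) has_real_derivative
           C * (1 - t * (artanh t - artanh a)) / sqrt (1 - t\<^sup>2)) (at t)"
    and "((\<lambda>t. C * (1 - t * (artanh t - artanh a)) / sqrt (1 - t\<^sup>2)) has_real_derivative
           - (1 / (1 - t\<^sup>2)\<^sup>2) * (C * sqrt (1 - t\<^sup>2) * (artanh t - artanh a))) (at t)"
proof -
  define g where "g = sqrt (1 - t\<^sup>2)"
  have abs_t: "\<bar>t\<bar> < 1" using t by simp
  have pos: "0 < 1 - t\<^sup>2" using t by (simp add: abs_square_less_1)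
  then have g: "0 < g" "1 - t\<^sup>2 = g * g" by (auto simp: g_def real_sqrt_mult[symmetric])
  show "((\<lambda>t. C * sqrt (1 - t\<^sup>2) * (artanh t - artanh a)) has_real_derivative
           C * (1 - t * (artanh t - artanh a)) / sqrt (1 - t\<^sup>2)) (at t)"
    using pos abs_t
    by (auto intro!: derivative_eq_intros simp: g_def[symmetric] g(2) simp del: power2_abs)
       (use g in \<open>simp add: field_simps\<close>)
  show "((\<lambda>t. C * (1 - t * (artanh t - artanh a)) / sqrt (1 - t\<^sup>2)) has_real_derivative
           - (1 / (1 - t\<^sup>2)\<^sup>2) * (C * sqrt (1 - t\<^sup>2) * (artanh t - artanh a))) (at t)"
    using pos abs_t
    by (auto intro!: derivative_eq_intros simp: g_def[symmetric] g(2))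
       (use g in \<open>simp add: field_simps power2_eq_square, algebra\<close>)
qed

lemma sine_two_point_bound:
  fixes \<phi> :: "real \<Rightarrow> 'a::real_inner"
  assumes C3: "C3_on \<phi> {-1<..<1}" and nz: "\<forall>x\<in>{-1<..<1}. vd \<phi> x \<noteq> 0"
    and S: "\<forall>x\<in>{-1<..<1}. ahlfors_S1 \<phi> x \<le> pi\<^sup>2 / 2"
  shows "\<forall>x1\<in>{-1<..<1}. \<forall>x2\<in>{-1<..<1}.
           norm (\<phi> x1 - \<phi> x2) / sqrt (norm (vd \<phi> x1) * norm (vd \<phi> x2))
             \<ge> 2 / pi * sin (pi / 2 * \<bar>x1 - x2\<bar>)"
proof (rule symmetric_two_point_bound)
  fix a b :: real assume ab: "-1 < a" "a < b" "b < 1"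
  have "2 / pi * sin (pi / 2 * (b - a))
      \<le> norm (\<phi> a - \<phi> b) / sqrt (norm (vd \<phi> a) * norm (vd \<phi> b))"
    by (rule curve_two_point_bound[OF C3 nz _ ab, where p = "\<lambda>_. pi\<^sup>2 / 4"
          and y = "\<lambda>t. 2 / pi * sin (pi / 2 * (t - a))" and ?y1.0 = "\<lambda>t. cos (pi / 2 * (t - a))"])
       (use S ab sine_comparison_solution[of a] in auto)
  then show "2 / pi * sin (pi / 2 * \<bar>a - b\<bar>)
      \<le> norm (\<phi> a - \<phi> b) / sqrt (norm (vd \<phi> a) * norm (vd \<phi> b))"
    using ab by simp
qed (simp_all add: abs_minus_commute norm_minus_commute mult.commute)

lemma hyperbolic_two_point_bound:
  fixes \<phi> :: "real \<Rightarrow> 'a::real_inner"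
  assumes C3: "C3_on \<phi> {-1<..<1}" and nz: "\<forall>x\<in>{-1<..<1}. vd \<phi> x \<noteq> 0"
    and S: "\<forall>x\<in>{-1<..<1}. ahlfors_S1 \<phi> x \<le> 2 / (1 - x\<^sup>2)\<^sup>2"
  shows "\<forall>x1\<in>{-1<..<1}. \<forall>x2\<in>{-1<..<1}.
           norm (\<phi> x1 - \<phi> x2) / sqrt (norm (vd \<phi> x1) * norm (vd \<phi> x2))
             \<ge> sqrt ((1 - x1\<^sup>2) * (1 - x2\<^sup>2)) * hdist x1 x2"
proof (rule symmetric_two_point_bound)
  fix a b :: real assume ab: "-1 < a" "a < b" "b < 1"
  have a2: "0 < 1 - a\<^sup>2" using ab by (simp add: abs_square_less_1)
  have "sqrt (1 - a\<^sup>2) * sqrt (1 - b\<^sup>2) * (artanh b - artanh a)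
      \<le> norm (\<phi> a - \<phi> b) / sqrt (norm (vd \<phi> a) * norm (vd \<phi> b))"
  proof (rule curve_two_point_bound[OF C3 nz _ ab, where p = "\<lambda>t. 1 / (1 - t\<^sup>2)\<^sup>2"
        and y = "\<lambda>t. sqrt (1 - a\<^sup>2) * sqrt (1 - t\<^sup>2) * (artanh t - artanh a)"
        and ?y1.0 = "\<lambda>t. sqrt (1 - a\<^sup>2) * (1 - t * (artanh t - artanh a)) / sqrt (1 - t\<^sup>2)"])
    fix t assume t: "a < t" "t \<le> b"
    have "0 < 1 - t\<^sup>2" using t ab by (simp add: abs_square_less_1)
    then show "0 < sqrt (1 - a\<^sup>2) * sqrt (1 - t\<^sup>2) * (artanh t - artanh a)"
      using a2 artanh_strict_mono[of a t] t ab by simp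
  qed (use S ab a2 hyperbolic_comparison_solution in auto)
  then show "sqrt ((1 - a\<^sup>2) * (1 - b\<^sup>2)) * hdist a b
      \<le> norm (\<phi> a - \<phi> b) / sqrt (norm (vd \<phi> a) * norm (vd \<phi> b))"
    using ab artanh_strict_mono[of a b] by (simp add: hdist_eq_artanh real_sqrt_mult)
qed (simp_all add: hdist_eq_artanh abs_minus_commute norm_minus_commute mult.commute)

theorem mainTheorem4:
  fixes \<phi> :: "real \<Rightarrow> real ^ 'n"
  assumes C3: "C3_on \<phi> {-1<..<1}"
    and nz: "\<forall>x\<in>{-1<..<1}. vd \<phi> x \<noteq> 0"
  shows "((\<forall>x\<in>{-1<..<1}. ahlfors_S1 \<phi> x \<le> pi\<^sup>2 / 2) \<longrightarrow>
          (\<forall>x1\<in>{-1<..<1}. \<forall>x2\<in>{-1<..<1}.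
             norm (\<phi> x1 - \<phi> x2) / sqrt (norm (vd \<phi> x1) * norm (vd \<phi> x2))
               \<ge> 2 / pi * sin (pi / 2 * \<bar>x1 - x2\<bar>)))
       \<and> ((\<forall>x\<in>{-1<..<1}. ahlfors_S1 \<phi> x \<le> 2 / (1 - x\<^sup>2)\<^sup>2) \<longrightarrow>
          (\<forall>x1\<in>{-1<..<1}. \<forall>x2\<in>{-1<..<1}.
             norm (\<phi> x1 - \<phi> x2) / sqrt (norm (vd \<phi> x1) * norm (vd \<phi> x2))
               \<ge> sqrt ((1 - x1\<^sup>2) * (1 - x2\<^sup>2)) * hdist x1 x2))"
  using sine_two_point_bound[OF C3 nz] hyperbolic_two_point_bound[OF C3 nz] by blast

end
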